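(* Under the standing assumptions below, let $\gamma>0$ and let $\{(y^t,z^t,x^t)\}$ be generated by the PR splitting iteration. Then there exists $\kappa>0$ (depending only on $\gamma$ and $L$) such that for all $t\ge1$, \[ \operatorname{dist}\big(0,\partial\mathcal{P}_\gamma(y^t,z^t,x^t)\big)\le\kappa\|y^{t+1}-y^t\| . \]
   Context: Standing assumptions: $f:\mathbb{R}^n\to\mathbb{R}$ is differentiable and strongly convex with modulus at least $\sigma>0$, and $\nabla f$ is Lipschitz continuous with modulus at most $L>0$. The function $g:\mathbb{R}^n\to(-\infty,\infty]$ is proper and lower semicontinuous, and for the $\gamma>0$ used, $\operatorname{Argmin}_u\{\gamma g(u)+\frac12\|u-w\|^2\}$ is nonempty for every $w\in\mathbb{R}^n$. PR splitting iteration: given $x^0$ and $\gamma>0$, for $t=0,1,2,\dots$: $y^{t+1}=\operatorname{argmin}_y\{f(y)+\frac{1}{2\gamma}\|y-x^t\|^2\}$; $z^{t+1}\in\operatorname{Argmin}_z\{g(z)+\frac{1}{2\gamma}\|2y^{t+1}-x^t-z\|^2\}$; $x^{t+1}=x^t+2(z^{t+1}-y^{t+1})$. Merit function: $\mathcal{P}_\gamma(y,z,x):=f(y)+g(z)-\frac{3}{2\gamma}\|y-z\|^2+\frac{1}{\gamma}\langle x-y,z-y\rangle$, regarded as a function on $\mathbb{R}^n\times\mathbb{R}^n\times\mathbb{R}^n$; $\partial\mathcal{P}_\gamma$ is its limiting subdifferential: $v\in\partial h(x)$ iff there exist $x^t\to x$ with $h(x^t)\to h(x)$ and $v^t\to v$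 such that $\liminf_{z\to x^t, z\ne x^t}\frac{h(z)-h(x^t)-\langle v^t,z-x^t\rangle}{\|z-x^t\|}\ge0$ for each $t$. *)

theory Defs
  imports "HOL-Analysis.Analysis" "HOL-Library.Extended_Real" "HOL-Library.Liminf_Limsup"
begin

definition strongly_convex :: "real \<Rightarrow> ('a::real_inner \<Rightarrow> real) \<Rightarrow> bool" where
  "strongly_convex \<sigma> f \<longleftrightarrow> convex_on UNIV (\<lambda>x. f x - (\<sigma> / 2) * (norm x)\<^sup>2)"

definition proper_fun :: "('a \<Rightarrow> ereal) \<Rightarrow> bool" where
  "proper_fun g \<longleftrightarrow> (\<forall>x. g x \<noteq> -\<infinity>) \<and> (\<exists>x. g x \<noteq> \<infinity>)"

definition lsc_fun :: "('a::topological_space \<Rightarrow> ereal) \<Rightarrow> bool" where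
  "lsc_fun g \<longleftrightarrow> (\<forall>a. closed {x. g x \<le> a})"

definition frechet_subdiff :: "('a::real_inner \<Rightarrow> ereal) \<Rightarrow> 'a \<Rightarrow> 'a set" where
  "frechet_subdiff h x = {v. \<bar>h x\<bar> \<noteq> \<infinity> \<and>
     Liminf (at x) (\<lambda>z. (h z - h x - ereal (v \<bullet> (z - x))) / ereal (norm (z - x))) \<ge> 0}"

definition limiting_subdiff :: "('a::real_inner \<Rightarrow> ereal) \<Rightarrow> 'a \<Rightarrow> 'a set" where
  "limiting_subdiff h x = {v. \<bar>h x\<bar> \<noteq> \<infinity> \<and>
     (\<exists>xs vs. xs \<longlonglongrightarrow> x \<and> (\<lambda>t. h (xs t)) \<longlonglongrightarrow> h x \<and> vs \<longlonglongrightarrow> v \<and>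
        (\<forall>t. vs t \<in> frechet_subdiff h (xs t)))}"

definition merit :: "real \<Rightarrow> ('a::real_inner \<Rightarrow> real) \<Rightarrow> ('a \<Rightarrow> ereal) \<Rightarrow> 'a \<times> 'a \<times> 'a \<Rightarrow> ereal" where
  "merit \<gamma> f g = (\<lambda>(y, z, x). ereal (f y) + g z +
      ereal (- (3 / (2 * \<gamma>)) * (norm (y - z))\<^sup>2 + (1 / \<gamma>) * ((x - y) \<bullet> (z - y))))"

end

theory Submission
  imports Defs
begin

text \<open>
  For t \<ge> 1 the y-step gives the optimality condition f'(y t) = (x (t-1) - y t) / \<gamma>, and the
  z-step says that z t minimises g plus a quadratic centred at 2 y t - x (t-1). Hence the merit
  function minus a suitable smooth function is minimal at (y t, z t, x t), and the gradient of
  that smooth function is a Frechet subgradient there. After the x-update this gradient reduces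
  to (0, 2 (y t - z t) / \<gamma>, (z t - y t) / \<gamma>), of norm sqrt 5 / \<gamma> * norm (y t - z t).
  Finally 2 (z t - y t) = x t - x (t-1) = (y (t+1) - y t) + \<gamma> (f'(y (t+1)) - f'(y t)), so the
  Lipschitz bound on f' yields the estimate with \<kappa> = sqrt 5 (1 + \<gamma> L) / (2 \<gamma>).
\<close>

lemma frechet_subdiff_subset_limiting_subdiff:
  "frechet_subdiff h x \<subseteq> limiting_subdiff h x"
proof
  fix v assume v: "v \<in> frechet_subdiff h x"
  then have "\<bar>h x\<bar> \<noteq> \<infinity>" by (simp add: frechet_subdiff_def)
  moreover have "\<exists>xs vs. xs \<longlonglongrightarrow> x \<and> (\<lambda>t. h (xs t)) \<longlonglongrightarrow> h x \<and> vs \<longlonglongrightarrow> v \<and>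
      (\<forall>t. vs t \<in> frechet_subdiff h (xs t))"
    by (rule exI[of _ "\<lambda>_. x"], rule exI[of _ "\<lambda>_. v"]) (simp add: v)
  ultimately show "v \<in> limiting_subdiff h x" by (simp add: limiting_subdiff_def)
qed

lemma frechet_subdiff_of_touching_minorant:
  fixes h :: "'a::real_inner \<Rightarrow> ereal"
  assumes G: "(G has_derivative (\<lambda>d. w \<bullet> d)) (at p)"
    and fin: "\<bar>h p\<bar> \<noteq> \<infinity>"
    and touch: "\<And>q. h p + ereal (G q) \<le> h q + ereal (G p)"
  shows "w \<in> frechet_subdiff h p"
proof -
  obtain c where c: "h p = ereal c" using fin by (cases "h p") auto
  have quotient_le: "ereal ((G q - G p - w \<bullet> (q - p)) / norm (q - p))
      \<le> (h q - h p - ereal (w \<bullet> (q - p))) / ereal (norm (q - p))" if "q \<noteq> p" for q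
  proof -
    have pos: "norm (q - p) > 0" using that by simp
    show ?thesis
    proof (cases "h q")
      case (real r)
      with touch[of q] c have "G q - G p \<le> r - c" by simp
      with pos have "(G q - G p - w \<bullet> (q - p)) / norm (q - p)
          \<le> (r - c - w \<bullet> (q - p)) / norm (q - p)"
        by (intro divide_right_mono) auto
      with real c pos show ?thesis by simp
    next
      case PInf
      with c pos show ?thesis by simp
    next
      case MInf
      with touch[of q] c show ?thesis by simp
    qed
  qed
  have "((\<lambda>q. (G q - G p - w \<bullet> (q - p)) / norm (q - p)) \<longlongrightarrow> 0) (at p)"
    using G unfolding has_derivative_at_within by (simp add: divide_inverse mult.commute)
  then have "0 \<le> Liminf (at p) (\<lambda>q. ereal ((G q - G p - w \<bullet> (q - p)) / norm (q - p)))"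
  proof (cases "at p = bot")
    case False
    with \<open>(_ \<longlongrightarrow> 0) (at p)\<close>
    have "Liminf (at p) (\<lambda>q. ereal ((G q - G p - w \<bullet> (q - p)) / norm (q - p))) = ereal 0"
      by (intro lim_imp_Liminf) auto
    then show ?thesis by (simp add: zero_ereal_def)
  qed simp
  also have "\<dots> \<le> Liminf (at p) (\<lambda>q. (h q - h p - ereal (w \<bullet> (q - p))) / ereal (norm (q - p)))"
    by (intro Liminf_mono) (auto simp: eventually_at_filter quotient_le)
  finally show ?thesis using fin by (simp add: frechet_subdiff_def)
qed

lemma prox_point_finite:
  assumes "proper_fun g" and "\<forall>v. g u + ereal (a u) \<le> g v + ereal (a v)"
  shows "\<bar>g u\<bar> \<noteq> \<infinity>"
proof -
  obtain v where "g v \<noteq> \<infinity>" and "\<forall>v. g v \<noteq> -\<infinity>"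
    using assms(1) by (auto simp: proper_fun_def)
  with assms(2)[rule_format, of v] show ?thesis by (cases "g u"; cases "g v") auto
qed

lemma prox_optimality_gradient:
  fixes f :: "'a::real_inner \<Rightarrow> real"
  assumes "\<gamma> > 0" and deriv: "(f has_derivative (\<lambda>h. d \<bullet> h)) (at u)"
    and min: "\<forall>v. f u + (norm (u - x))\<^sup>2 / (2 * \<gamma>) \<le> f v + (norm (v - x))\<^sup>2 / (2 * \<gamma>)"
  shows "d = (1 / \<gamma>) *\<^sub>R (x - u)"
proof -
  let ?grad = "d - (1 / \<gamma>) *\<^sub>R (x - u)"
  have "((\<lambda>v. f v + ((v - x) \<bullet> (v - x)) / (2 * \<gamma>)) has_derivative (\<lambda>h. ?grad \<bullet> h)) (at u)"
    using assms(1)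
    by (auto intro!: derivative_eq_intros deriv
        simp: inner_simps algebra_simps inner_commute add_divide_distrib diff_divide_distrib)
  then have "(\<lambda>h. ?grad \<bullet> h) = (\<lambda>h. 0)"
    by (rule has_derivative_local_min) (use min in \<open>simp add: power2_norm_eq_inner\<close>)
  then have "?grad \<bullet> ?grad = 0" by (rule fun_cong)
  then show ?thesis by simp
qed

lemma merit_frechet_subgradient:
  fixes f :: "'a::real_inner \<Rightarrow> real" and g :: "'a \<Rightarrow> ereal"
  assumes "\<gamma> > 0" and deriv: "(f has_derivative (\<lambda>h. d \<bullet> h)) (at y)"
    and fin: "\<bar>g z\<bar> \<noteq> \<infinity>"
    and prox: "\<forall>v. g z + ereal ((norm (a - z))\<^sup>2 / (2 * \<gamma>))
                   \<le> g v + ereal ((norm (a - v))\<^sup>2 / (2 * \<gamma>))"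
  shows "(d + (1 / \<gamma>) *\<^sub>R (2 *\<^sub>R z - y - x),
          (1 / \<gamma>) *\<^sub>R (a + 2 *\<^sub>R y + x - 4 *\<^sub>R z),
          (1 / \<gamma>) *\<^sub>R (z - y)) \<in> frechet_subdiff (merit \<gamma> f g) (y, z, x)"
proof (rule frechet_subdiff_of_touching_minorant)
  define coupling :: "'a \<times> 'a \<times> 'a \<Rightarrow> real" where
    "coupling = (\<lambda>(y, z, x). - (3 / (2 * \<gamma>)) * (norm (y - z))\<^sup>2 + (1 / \<gamma>) * ((x - y) \<bullet> (z - y)))"
  \<comment> \<open>The merit function minus G is g z' + norm (a - z')^2 / (2 \<gamma>), minimal at z' = z.\<close>
  define G where "G = (\<lambda>p. f (fst p) - (norm (a - fst (snd p)))\<^sup>2 / (2 * \<gamma>) + coupling p)"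
  have merit_eq: "merit \<gamma> f g p = ereal (f (fst p)) + g (fst (snd p)) + ereal (coupling p)" for p
    by (cases p) (simp add: merit_def coupling_def)
  show "\<bar>merit \<gamma> f g (y, z, x)\<bar> \<noteq> \<infinity>"
    using fin by (cases "g z") (simp_all add: merit_eq)
  show "merit \<gamma> f g (y, z, x) + ereal (G q) \<le> merit \<gamma> f g q + ereal (G (y, z, x))" for q
    using prox[rule_format, of "fst (snd q)"] fin
    by (cases "g z"; cases "g (fst (snd q))") (auto simp: merit_eq G_def)
  have "((\<lambda>p. f (fst p)) has_derivative (\<lambda>h. d \<bullet> fst h)) (at (y, z, x))"
    using has_derivative_compose[OF has_derivative_fst[OF has_derivative_ident, of "at (y, z, x)"]]
      deriv
    by simp
  then show "(G has_derivative (\<lambda>h. (d + (1 / \<gamma>) *\<^sub>R (2 *\<^sub>R z - y - x),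
          (1 / \<gamma>) *\<^sub>R (a + 2 *\<^sub>R y + x - 4 *\<^sub>R z),
          (1 / \<gamma>) *\<^sub>R (z - y)) \<bullet> h)) (at (y, z, x))"
    unfolding G_def coupling_def case_prod_beta power2_norm_eq_inner
    using \<open>\<gamma> > 0\<close>
    by (auto intro!: derivative_eq_intros
        simp: inner_simps algebra_simps inner_commute add_divide_distrib diff_divide_distrib)
qed

lemma pr_step_merit_subgradient:
  fixes f :: "'a::real_inner \<Rightarrow> real" and g :: "'a \<Rightarrow> ereal"
  assumes "\<gamma> > 0" and deriv: "(f has_derivative (\<lambda>h. d \<bullet> h)) (at y)" and "proper_fun g"
    and y_step: "\<forall>v. f y + (norm (y - x))\<^sup>2 / (2 * \<gamma>) \<le> f v + (norm (v - x))\<^sup>2 / (2 * \<gamma>)"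
    and z_step: "\<forall>v. g z + ereal ((norm (2 *\<^sub>R y - x - z))\<^sup>2 / (2 * \<gamma>))
                     \<le> g v + ereal ((norm (2 *\<^sub>R y - x - v))\<^sup>2 / (2 * \<gamma>))"
  shows "(0, (2 / \<gamma>) *\<^sub>R (y - z), (1 / \<gamma>) *\<^sub>R (z - y))
           \<in> limiting_subdiff (merit \<gamma> f g) (y, z, x + 2 *\<^sub>R (z - y))"
proof -
  have grad: "d = (1 / \<gamma>) *\<^sub>R (x - y)"
    using prox_optimality_gradient[OF \<open>\<gamma> > 0\<close> deriv y_step] .
  have "\<bar>g z\<bar> \<noteq> \<infinity>"
    using prox_point_finite[OF \<open>proper_fun g\<close> z_step] .
  from merit_frechet_subgradient[OF \<open>\<gamma> > 0\<close> deriv this z_step, of "x + 2 *\<^sub>R (z - y)"]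
  have "(d + (1 / \<gamma>) *\<^sub>R (2 *\<^sub>R z - y - (x + 2 *\<^sub>R (z - y))),
         (1 / \<gamma>) *\<^sub>R (2 *\<^sub>R y - x + 2 *\<^sub>R y + (x + 2 *\<^sub>R (z - y)) - 4 *\<^sub>R z),
         (1 / \<gamma>) *\<^sub>R (z - y)) \<in> frechet_subdiff (merit \<gamma> f g) (y, z, x + 2 *\<^sub>R (z - y))" .
  also have "(d + (1 / \<gamma>) *\<^sub>R (2 *\<^sub>R z - y - (x + 2 *\<^sub>R (z - y))),
         (1 / \<gamma>) *\<^sub>R (2 *\<^sub>R y - x + 2 *\<^sub>R y + (x + 2 *\<^sub>R (z - y)) - 4 *\<^sub>R z),
         (1 / \<gamma>) *\<^sub>R (z - y)) = (0, (2 / \<gamma>) *\<^sub>R (y - z), (1 / \<gamma>) *\<^sub>R (z - y))"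
  proof -
    have "4 *\<^sub>R z = 2 *\<^sub>R z + 2 *\<^sub>R z" by (simp flip: scaleR_add_left)
    then show ?thesis
      by (simp add: grad algebra_simps scaleR_2 divide_inverse flip: scaleR_add_right scaleR_scaleR)
  qed
  finally show ?thesis
    using frechet_subdiff_subset_limiting_subdiff by blast
qed

lemma norm_pr_subgradient:
  assumes "\<gamma> > 0"
  shows "norm (0::'a::real_normed_vector, (2 / \<gamma>) *\<^sub>R (y - z), (1 / \<gamma>) *\<^sub>R (z - y))
    = sqrt 5 / \<gamma> * norm (y - z)"
  using assms
  by (simp add: norm_Pair norm_minus_commute power_mult_distrib power_divide real_sqrt_mult real_sqrt_divide)

lemma pr_iterate_gap_le:
  fixes f' :: "'a::real_normed_vector \<Rightarrow> 'a"
  assumes "\<gamma> > 0" and lip: "L-lipschitz_on UNIV f'"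
    and grad: "f' y = (1 / \<gamma>) *\<^sub>R (x - y)" and grad': "f' y' = (1 / \<gamma>) *\<^sub>R (x' - y')"
    and x': "x' = x + 2 *\<^sub>R (z - y)"
  shows "2 * norm (y - z) \<le> (1 + \<gamma> * L) * norm (y' - y)"
proof -
  have "x = y + \<gamma> *\<^sub>R f' y" and "x' = y' + \<gamma> *\<^sub>R f' y'"
    using \<open>\<gamma> > 0\<close> by (simp_all add: grad grad')
  then have "2 *\<^sub>R (z - y) = (y' - y) + \<gamma> *\<^sub>R (f' y' - f' y)"
    using x' by (simp add: algebra_simps)
  then have "2 * norm (y - z) = norm ((y' - y) + \<gamma> *\<^sub>R (f' y' - f' y))"
    by (metis norm_minus_commute norm_scaleR abs_numeral)
  also have "\<dots> \<le> norm (y' - y) + \<gamma> * norm (f' y' - f' y)"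
    using \<open>\<gamma> > 0\<close> by (metis abs_of_pos norm_scaleR norm_triangle_ineq)
  also have "\<dots> \<le> norm (y' - y) + \<gamma> * (L * norm (y' - y))"
    using lipschitz_onD[OF lip, of y' y] \<open>\<gamma> > 0\<close> by (simp add: dist_norm)
  finally show ?thesis by (simp add: algebra_simps)
qed

lemma pr_splitting_merit_error_bound:
  fixes f :: "'a::real_inner \<Rightarrow> real" and g :: "'a \<Rightarrow> ereal"
  assumes "\<gamma> > 0"
    and deriv: "\<forall>u. (f has_derivative (\<lambda>h. f' u \<bullet> h)) (at u)"
    and lip: "L-lipschitz_on UNIV f'" and "proper_fun g"
    and y_step: "\<forall>t. \<forall>v. f (y (Suc t)) + (norm (y (Suc t) - x t))\<^sup>2 / (2 * \<gamma>)
                 \<le> f v + (norm (v - x t))\<^sup>2 / (2 * \<gamma>)"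
    and z_step: "\<forall>t. \<forall>v. g (z (Suc t)) + ereal ((norm (2 *\<^sub>R y (Suc t) - x t - z (Suc t)))\<^sup>2 / (2 * \<gamma>))
                 \<le> g v + ereal ((norm (2 *\<^sub>R y (Suc t) - x t - v))\<^sup>2 / (2 * \<gamma>))"
    and x_step: "\<forall>t. x (Suc t) = x t + 2 *\<^sub>R (z (Suc t) - y (Suc t))"
    and "t \<ge> 1"
  shows "limiting_subdiff (merit \<gamma> f g) (y t, z t, x t) \<noteq> {} \<and>
    infdist 0 (limiting_subdiff (merit \<gamma> f g) (y t, z t, x t))
      \<le> sqrt 5 * (1 + \<gamma> * L) / (2 * \<gamma>) * norm (y (Suc t) - y t)"
proof -
  obtain s where t: "t = Suc s" using \<open>t \<ge> 1\<close> by (cases t) auto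
  have grad: "f' (y (Suc r)) = (1 / \<gamma>) *\<^sub>R (x r - y (Suc r))" for r
    using prox_optimality_gradient[OF \<open>\<gamma> > 0\<close> deriv[rule_format] spec[OF y_step]] .
  let ?w = "(0, (2 / \<gamma>) *\<^sub>R (y (Suc s) - z (Suc s)), (1 / \<gamma>) *\<^sub>R (z (Suc s) - y (Suc s)))"
  have "?w \<in> limiting_subdiff (merit \<gamma> f g) (y (Suc s), z (Suc s), x (Suc s))"
    using pr_step_merit_subgradient[OF \<open>\<gamma> > 0\<close> deriv[rule_format] \<open>proper_fun g\<close>
        spec[OF y_step, of s] spec[OF z_step, of s]] x_step by simp
  moreover have "norm ?w \<le> sqrt 5 * (1 + \<gamma> * L) / (2 * \<gamma>) * norm (y (Suc (Suc s)) - y (Suc s))"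
  proof -
    have "norm ?w = sqrt 5 / (2 * \<gamma>) * (2 * norm (y (Suc s) - z (Suc s)))"
      using norm_pr_subgradient[OF \<open>\<gamma> > 0\<close>] by simp
    also have "\<dots> \<le> sqrt 5 / (2 * \<gamma>) * ((1 + \<gamma> * L) * norm (y (Suc (Suc s)) - y (Suc s)))"
      using pr_iterate_gap_le[OF \<open>\<gamma> > 0\<close> lip grad grad x_step[rule_format]] \<open>\<gamma> > 0\<close>
      by (intro mult_left_mono) auto
    finally show ?thesis by simp
  qed
  ultimately show ?thesis
    using infdist_le[of ?w _ 0] t by fastforce
qed

theorem mainTheorem5:
  shows "\<forall>(\<gamma>::real) (L::real). \<gamma> > 0 \<longrightarrow> L > 0 \<longrightarrow>
    (\<exists>\<kappa>>0. \<forall>(f :: 'a::euclidean_space \<Rightarrow> real) (f' :: 'a \<Rightarrow> 'a) (g :: 'a \<Rightarrow> ereal)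
        (\<sigma>::real) (y :: nat \<Rightarrow> 'a) (z :: nat \<Rightarrow> 'a) (x :: nat \<Rightarrow> 'a).
      \<sigma> > 0 \<longrightarrow>
      (\<forall>u. (f has_derivative (\<lambda>h. f' u \<bullet> h)) (at u)) \<longrightarrow>
      strongly_convex \<sigma> f \<longrightarrow>
      L-lipschitz_on UNIV f' \<longrightarrow>
      proper_fun g \<longrightarrow> lsc_fun g \<longrightarrow>
      (\<forall>w. \<exists>u. \<forall>v. ereal \<gamma> * g u + ereal ((norm (u - w))\<^sup>2 / 2)
                     \<le> ereal \<gamma> * g v + ereal ((norm (v - w))\<^sup>2 / 2)) \<longrightarrow>
      (\<forall>t. \<forall>v. f (y (Suc t)) + (norm (y (Suc t) - x t))\<^sup>2 / (2 * \<gamma>)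
                 \<le> f v + (norm (v - x t))\<^sup>2 / (2 * \<gamma>)) \<longrightarrow>
      (\<forall>t. \<forall>v. g (z (Suc t)) + ereal ((norm (2 *\<^sub>R y (Suc t) - x t - z (Suc t)))\<^sup>2 / (2 * \<gamma>))
                 \<le> g v + ereal ((norm (2 *\<^sub>R y (Suc t) - x t - v))\<^sup>2 / (2 * \<gamma>))) \<longrightarrow>
      (\<forall>t. x (Suc t) = x t + 2 *\<^sub>R (z (Suc t) - y (Suc t))) \<longrightarrow>
      (\<forall>t\<ge>1. limiting_subdiff (merit \<gamma> f g) (y t, z t, x t) \<noteq> {} \<and>
         infdist 0 (limiting_subdiff (merit \<gamma> f g) (y t, z t, x t)) \<le> \<kappa> * norm (y (Suc t) - y t)))"
  apply (intro allI impI)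
  subgoal for \<gamma> L
    apply (rule exI[of _ "sqrt 5 * (1 + \<gamma> * L) / (2 * \<gamma>)"], rule conjI)
     apply (simp add: pos_add_strict)
    by (intro allI impI) (rule pr_splitting_merit_error_bound; assumption)
  done

end
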